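(* Let $G$ be a smallest counterexample to the statement "every $n$-vertex triangulation has an independent dominating set of size at most $n/3$" (i.e., $G$ is a triangulation on $n$ vertices with no independent dominating set of size at most $n/3$, and every triangulation with fewer vertices has an independent dominating set of size at most one third of its number of vertices). Let $\psi$ be a partial proper $4$-coloring of $G$ such that every uncolored vertex has degree exactly four, $|\psi[v]|\ge 3$ for every vertex $v$, and $|\psi[v]|=4$ for every vertex $v$ of degree at most five. Then every bad edge of $G$ is part of two critical cycles.
   Context: Graphs are finite, undirected and simple. A triangulation is a planar graph embedded in the plane such that every face, including the outer face, is bounded by a cycle on three edges. A set $S\subseteq V(G)$ is an independent dominating set if no two vertices of $S$ are adjacent and every vertex not in $S$ has a neighbor in $S$. A partial proper $4$-coloring assigns to some vertices colors from $\{1,2,3,4\}$ with adjacent colored vertices receiving distinct colors. $\psi[v]$ is the set of colors used by $\psi$ on the closed neighborhood $N[v]$. For $i\in\{1,2,3,4\}$, $C_i$ is the set of vertices of color $i$, and $U_i$ is the set of vertices of $G$ not in $C_i$ and having no neighbor in $C_i$. A bad edge is an edge between $U_i$ and $U_j$ for some $i\neq j$. A critical cycle is the $4$-cycle formed by the neighbors of an uncolored vertex (the cycle around that vertex in the triangulation). *)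

theory Defs
  imports "HOL-Analysis.Analysis"
begin

definition simple_graph :: "'a set \<Rightarrow> ('a \<Rightarrow> 'a \<Rightarrow> bool) \<Rightarrow> bool" where
  "simple_graph V E \<longleftrightarrow> finite V \<and>
     (\<forall>u v. E u v \<longrightarrow> u \<in> V \<and> v \<in> V \<and> u \<noteq> v \<and> E v u)"

definition degree :: "'a set \<Rightarrow> ('a \<Rightarrow> 'a \<Rightarrow> bool) \<Rightarrow> 'a \<Rightarrow> nat" where
  "degree V E v = card {w \<in> V. E v w}"

definition independent_dominating_set :: "'a set \<Rightarrow> ('a \<Rightarrow> 'a \<Rightarrow> bool) \<Rightarrow> 'a set \<Rightarrow> bool" where
  "independent_dominating_set V E S \<longleftrightarrow> S \<subseteq> V \<and>
     (\<forall>u\<in>S. \<forall>v\<in>S. \<not> E u v) \<and>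
     (\<forall>v\<in>V - S. \<exists>u\<in>S. E v u)"

definition plane_embedding ::
  "'a set \<Rightarrow> ('a \<Rightarrow> 'a \<Rightarrow> bool) \<Rightarrow> ('a \<Rightarrow> complex) \<Rightarrow> ('a \<Rightarrow> 'a \<Rightarrow> real \<Rightarrow> complex) \<Rightarrow> bool" where
  "plane_embedding V E p \<gamma> \<longleftrightarrow>
     inj_on p V \<and>
     (\<forall>u v. E u v \<longrightarrow> arc (\<gamma> u v) \<and> pathstart (\<gamma> u v) = p u \<and> pathfinish (\<gamma> u v) = p v
                     \<and> \<gamma> v u = reversepath (\<gamma> u v)
                     \<and> path_image (\<gamma> u v) \<inter> p ` V = {p u, p v}) \<and>
     (\<forall>u v x y. E u v \<longrightarrow> E x y \<longrightarrow> {u, v} \<noteq> {x, y} \<longrightarrow>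
         path_image (\<gamma> u v) \<inter> path_image (\<gamma> x y) \<subseteq> p ` ({u, v} \<inter> {x, y}))"

definition drawing :: "'a set \<Rightarrow> ('a \<Rightarrow> 'a \<Rightarrow> bool) \<Rightarrow> ('a \<Rightarrow> complex) \<Rightarrow> ('a \<Rightarrow> 'a \<Rightarrow> real \<Rightarrow> complex) \<Rightarrow> complex set" where
  "drawing V E p \<gamma> = p ` V \<union> \<Union> {path_image (\<gamma> u v) | u v. E u v}"

definition faces :: "'a set \<Rightarrow> ('a \<Rightarrow> 'a \<Rightarrow> bool) \<Rightarrow> ('a \<Rightarrow> complex) \<Rightarrow> ('a \<Rightarrow> 'a \<Rightarrow> real \<Rightarrow> complex) \<Rightarrow> complex set set" where
  "faces V E p \<gamma> = components (- drawing V E p \<gamma>)"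

definition facial_triangle ::
  "'a set \<Rightarrow> ('a \<Rightarrow> 'a \<Rightarrow> bool) \<Rightarrow> ('a \<Rightarrow> complex) \<Rightarrow> ('a \<Rightarrow> 'a \<Rightarrow> real \<Rightarrow> complex) \<Rightarrow> 'a \<Rightarrow> 'a \<Rightarrow> 'a \<Rightarrow> bool" where
  "facial_triangle V E p \<gamma> x u w \<longleftrightarrow>
     x \<noteq> u \<and> u \<noteq> w \<and> w \<noteq> x \<and> E x u \<and> E u w \<and> E w x \<and>
     (\<exists>f \<in> faces V E p \<gamma>.
        frontier f = path_image (\<gamma> x u) \<union> path_image (\<gamma> u w) \<union> path_image (\<gamma> w x))"

definition triangulation_emb ::
  "'a set \<Rightarrow> ('a \<Rightarrow> 'a \<Rightarrow> bool) \<Rightarrow> ('a \<Rightarrow> complex) \<Rightarrow> ('a \<Rightarrow> 'a \<Rightarrow> real \<Rightarrow> complex) \<Rightarrow> bool" where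
  "triangulation_emb V E p \<gamma> \<longleftrightarrow>
     simple_graph V E \<and> plane_embedding V E p \<gamma> \<and>
     (\<forall>f \<in> faces V E p \<gamma>. \<exists>x u w.
        x \<noteq> u \<and> u \<noteq> w \<and> w \<noteq> x \<and> E x u \<and> E u w \<and> E w x \<and>
        frontier f = path_image (\<gamma> x u) \<union> path_image (\<gamma> u w) \<union> path_image (\<gamma> w x))"

definition triangulation :: "'a set \<Rightarrow> ('a \<Rightarrow> 'a \<Rightarrow> bool) \<Rightarrow> bool" where
  "triangulation V E \<longleftrightarrow> (\<exists>p \<gamma>. triangulation_emb V E p \<gamma>)"

text \<open>psi v = None: v uncoloured; psi v = Some i: v has colour i.\<close>

definition partial_proper_4_coloring :: "'a set \<Rightarrow> ('a \<Rightarrow> 'a \<Rightarrow> bool) \<Rightarrow> ('a \<Rightarrow> nat option) \<Rightarrow> bool" where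
  "partial_proper_4_coloring V E \<psi> \<longleftrightarrow>
     (\<forall>v\<in>V. \<forall>i. \<psi> v = Some i \<longrightarrow> i \<in> {1..4}) \<and>
     (\<forall>u v. E u v \<longrightarrow> \<psi> u \<noteq> None \<longrightarrow> \<psi> u \<noteq> \<psi> v)"

text \<open>psi[v]: set of colours used on the closed neighbourhood N[v].\<close>

definition colors_closed_nbhd :: "'a set \<Rightarrow> ('a \<Rightarrow> 'a \<Rightarrow> bool) \<Rightarrow> ('a \<Rightarrow> nat option) \<Rightarrow> 'a \<Rightarrow> nat set" where
  "colors_closed_nbhd V E \<psi> v = {c. \<exists>w\<in>V. (w = v \<or> E v w) \<and> \<psi> w = Some c}"

definition color_class :: "'a set \<Rightarrow> ('a \<Rightarrow> nat option) \<Rightarrow> nat \<Rightarrow> 'a set" where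
  "color_class V \<psi> i = {v\<in>V. \<psi> v = Some i}"

definition U_set :: "'a set \<Rightarrow> ('a \<Rightarrow> 'a \<Rightarrow> bool) \<Rightarrow> ('a \<Rightarrow> nat option) \<Rightarrow> nat \<Rightarrow> 'a set" where
  "U_set V E \<psi> i = {v\<in>V. v \<notin> color_class V \<psi> i \<and> (\<forall>w\<in>color_class V \<psi> i. \<not> E v w)}"

definition bad_edge :: "'a set \<Rightarrow> ('a \<Rightarrow> 'a \<Rightarrow> bool) \<Rightarrow> ('a \<Rightarrow> nat option) \<Rightarrow> 'a \<Rightarrow> 'a \<Rightarrow> bool" where
  "bad_edge V E \<psi> u v \<longleftrightarrow> E u v \<and>
     (\<exists>i\<in>{1..4}. \<exists>j\<in>{1..4}. i \<noteq> j \<and> u \<in> U_set V E \<psi> i \<and> v \<in> U_set V E \<psi> j)"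

text \<open>Edge uw lies on the critical cycle of the uncoloured vertex x, i.e. on the
cycle around x: x is uncoloured and x, u, w bound a face.\<close>

definition on_critical_cycle ::
  "'a set \<Rightarrow> ('a \<Rightarrow> 'a \<Rightarrow> bool) \<Rightarrow> ('a \<Rightarrow> complex) \<Rightarrow> ('a \<Rightarrow> 'a \<Rightarrow> real \<Rightarrow> complex) \<Rightarrow> ('a \<Rightarrow> nat option)
     \<Rightarrow> 'a \<Rightarrow> 'a \<Rightarrow> 'a \<Rightarrow> bool" where
  "on_critical_cycle V E p \<gamma> \<psi> x u w \<longleftrightarrow>
     x \<in> V \<and> \<psi> x = None \<and> facial_triangle V E p \<gamma> x u w"

end

theory Submission
  imports Defs
begin

text \<open>A vertex of some U_i is coloured: an uncoloured vertex has degree 4, so its closed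
neighbourhood sees all four colours. Hence, for a bad edge uv with u \<in> U_i and v \<in> U_j, a coloured
common neighbour w would give u, v, w three distinct colours avoiding both i and j, which is
impossible; so every common neighbour of u and v is uncoloured. Topologically, a point in the
middle of the arc uv lies on the frontier of faces on both sides of the triangle bounding one of
them, so uv lies on two facial triangles; their apexes differ unless the graph is that single
triangle, where {u} is an independent dominating set of size n/3.\<close>

lemma closure_Union_finite:
  assumes "finite F"
  shows "closure (\<Union>F) = \<Union>(closure ` F)"
  using assms by (induction F rule: finite_induct) (auto simp: closure_Un)

lemma interior_arc_image_empty:
  fixes g :: "real \<Rightarrow> 'a::euclidean_space"
  assumes "arc g" and "2 \<le> DIM('a)"
  shows "interior (path_image g) = {}"
proof (rule ccontr)
  assume "interior (path_image g) \<noteq> {}"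
  then obtain x e where "e > 0" and ball: "ball x e \<subseteq> path_image g"
    by (metis all_not_in_conv mem_interior)
  obtain h where h: "homeomorphism {0..1} (path_image g) g h"
    using homeomorphism_arc[OF assms(1)] by blast
  have "continuous_on (ball x e) h"
    using h ball unfolding homeomorphism_def by (meson continuous_on_subset)
  moreover have "inj_on h (ball x e)"
    using h ball unfolding homeomorphism_def by (metis inj_on_def subsetD)
  ultimately have "DIM('a) \<le> DIM(real)"
    using invariance_of_dimension \<open>e > 0\<close> by (metis centre_in_ball empty_iff open_ball)
  then show False
    using assms(2) by simp
qed

lemma arc_point_in_closure_complement:
  fixes g :: "real \<Rightarrow> 'a::euclidean_space"
  assumes "arc g" "2 \<le> DIM('a)" "r > 0" "ball z r \<inter> D \<subseteq> path_image g"
  shows "z \<in> closure (- D)"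
proof (rule ccontr)
  assume "z \<notin> closure (- D)"
  then obtain s where "s > 0" "ball z s \<subseteq> D"
    by (metis closure_complement ComplI mem_interior)
  then have "ball z (min r s) \<subseteq> ball z r \<inter> D"
    by auto
  then have "ball z (min r s) \<subseteq> path_image g"
    using assms(4) by blast
  then have "z \<in> interior (path_image g)"
    unfolding mem_interior using \<open>s > 0\<close> assms(3) by (metis min_less_iff_conj)
  then show False
    using interior_arc_image_empty[OF assms(1,2)] by simp
qed

lemma connected_eq_Jordan_inside_or_outside:
  fixes c :: "real \<Rightarrow> complex"
  assumes "simple_path c" "pathfinish c = pathstart c"
    and "connected f" "f \<noteq> {}" "f \<inter> path_image c = {}" "frontier f \<subseteq> path_image c"
  shows "f = inside (path_image c) \<or> f = outside (path_image c)"
proof -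
  let ?I = "inside (path_image c)" and ?O = "outside (path_image c)"
  have J: "open ?I" "connected ?I" "open ?O" "connected ?O" "?I \<inter> ?O = {}"
    "?I \<union> ?O = - path_image c"
    using Jordan_inside_outside[OF assms(1,2)] by auto
  have fill: "S \<subseteq> f" if "connected S" "f \<subseteq> S" "S \<inter> path_image c = {}" for S
  proof (rule ccontr)
    assume "\<not> S \<subseteq> f"
    then have "S \<inter> frontier f \<noteq> {}"
      using connected_Int_frontier[OF \<open>connected S\<close>] that(2) assms(4) by blast
    then show False
      using that(3) assms(6) by blast
  qed
  have "f \<subseteq> ?I \<or> f \<subseteq> ?O"
    using connectedD[OF assms(3), of ?I ?O] J assms(5) by blast
  then show ?thesis
    using fill J by blast
qed

lemma plane_embedding_triangle_simple_loop:
  assumes emb: "plane_embedding V E p \<gamma>"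
    and "E a b" "E b c" "E c a" "a \<noteq> b" "b \<noteq> c" "c \<noteq> a"
  obtains g where "simple_path g" "pathfinish g = pathstart g"
    "path_image g = path_image (\<gamma> a b) \<union> path_image (\<gamma> b c) \<union> path_image (\<gamma> c a)"
proof -
  have arc: "arc (\<gamma> x y)" "pathstart (\<gamma> x y) = p x" "pathfinish (\<gamma> x y) = p y" if "E x y" for x y
    using emb that unfolding plane_embedding_def by blast+
  have meet: "path_image (\<gamma> x y) \<inter> path_image (\<gamma> y z) \<subseteq> {p y}"
    if "E x y" "E y z" "x \<noteq> y" "y \<noteq> z" "z \<noteq> x" for x y z
  proof -
    have "{x, y} \<noteq> {y, z}" "{x, y} \<inter> {y, z} = {y}"
      using that by (auto simp: doubleton_eq_iff)
    then show ?thesis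
      using emb that unfolding plane_embedding_def by (metis image_empty image_insert)
  qed
  have arc_bca: "arc (\<gamma> b c +++ \<gamma> c a)"
    by (rule arc_join) (use arc meet assms in auto)
  have image_bca: "path_image (\<gamma> b c +++ \<gamma> c a) = path_image (\<gamma> b c) \<union> path_image (\<gamma> c a)"
    by (rule path_image_join) (use arc assms in auto)
  have "simple_path (\<gamma> a b +++ (\<gamma> b c +++ \<gamma> c a))"
    by (rule simple_path_join_loop)
      (use arc arc_bca image_bca meet[of a b c] meet[of c a b] assms in auto)
  moreover have "path_image (\<gamma> a b +++ (\<gamma> b c +++ \<gamma> c a)) =
      path_image (\<gamma> a b) \<union> path_image (\<gamma> b c) \<union> path_image (\<gamma> c a)"
    using path_image_join[of "\<gamma> a b" "\<gamma> b c +++ \<gamma> c a"] arc assms image_bca by auto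
  ultimately show ?thesis
    using that arc assms by auto
qed

locale plane_triangulation =
  fixes V :: "'a set" and E :: "'a \<Rightarrow> 'a \<Rightarrow> bool"
    and p :: "'a \<Rightarrow> complex" and \<gamma> :: "'a \<Rightarrow> 'a \<Rightarrow> real \<Rightarrow> complex"
  assumes embedded: "triangulation_emb V E p \<gamma>"
begin

abbreviation edge_image :: "'a \<Rightarrow> 'a \<Rightarrow> complex set" where
  "edge_image a b \<equiv> path_image (\<gamma> a b)"

abbreviation triangle_image :: "'a \<Rightarrow> 'a \<Rightarrow> 'a \<Rightarrow> complex set" where
  "triangle_image a b c \<equiv> edge_image a b \<union> edge_image b c \<union> edge_image c a"

abbreviation plane_drawing :: "complex set" where
  "plane_drawing \<equiv> drawing V E p \<gamma>"

abbreviation face_set :: "complex set set" where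
  "face_set \<equiv> faces V E p \<gamma>"

definition triangular_face :: "complex set \<Rightarrow> 'a \<Rightarrow> 'a \<Rightarrow> 'a \<Rightarrow> bool" where
  "triangular_face f x u w \<longleftrightarrow> f \<in> face_set \<and>
     x \<noteq> u \<and> u \<noteq> w \<and> w \<noteq> x \<and> E x u \<and> E u w \<and> E w x \<and> frontier f = triangle_image x u w"

lemma facial_triangle_iff_triangular_face:
  "facial_triangle V E p \<gamma> x u w \<longleftrightarrow> (\<exists>f. triangular_face f x u w)"
  unfolding facial_triangle_def triangular_face_def by blast

lemma simple_graph: "simple_graph V E"
  and plane_embedding: "plane_embedding V E p \<gamma>"
  using embedded unfolding triangulation_emb_def by blast+

lemma finite_vertices: "finite V"
  using simple_graph unfolding simple_graph_def by blast

lemma edgeD: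
  assumes "E a b"
  shows "a \<in> V" "b \<in> V" "a \<noteq> b" "E b a"
  using simple_graph assms unfolding simple_graph_def by blast+

lemma inj_on_vertices: "inj_on p V"
  using plane_embedding unfolding plane_embedding_def by blast

lemma edge_arc:
  assumes "E a b"
  shows "arc (\<gamma> a b)" "pathstart (\<gamma> a b) = p a" "pathfinish (\<gamma> a b) = p b"
    "edge_image a b \<inter> p ` V = {p a, p b}"
  using plane_embedding assms unfolding plane_embedding_def by blast+

lemma edge_image_commute: "E a b \<Longrightarrow> edge_image b a = edge_image a b"
  using plane_embedding unfolding plane_embedding_def by (metis path_image_reversepath)

lemma edge_images_meet_in_vertices:
  "E a b \<Longrightarrow> E c d \<Longrightarrow> {a, b} \<noteq> {c, d} \<Longrightarrow>
    edge_image a b \<inter> edge_image c d \<subseteq> p ` ({a, b} \<inter> {c, d})"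
  using plane_embedding unfolding plane_embedding_def by blast

lemma closed_edge_images: "closed (\<Union>{edge_image a b | a b. E a b \<and> P a b})"
proof (rule closed_Union)
  have "{(a, b). E a b} \<subseteq> V \<times> V"
    using edgeD by blast
  then have "finite {(a, b). E a b}"
    using finite_vertices finite_subset by blast
  moreover have "{edge_image a b | a b. E a b \<and> P a b} \<subseteq> (\<lambda>(a, b). edge_image a b) ` {(a, b). E a b}"
    by auto
  ultimately show "finite {edge_image a b | a b. E a b \<and> P a b}"
    by (meson finite_imageI finite_subset)
  show "\<forall>S \<in> {edge_image a b | a b. E a b \<and> P a b}. closed S"
    using edge_arc by (auto intro: closed_path_image arc_imp_path)
qed

lemma closed_plane_drawing: "closed plane_drawing"
proof -
  have "closed (p ` V)"
    using finite_vertices by (simp add: finite_imp_closed)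
  then show ?thesis
    using closed_edge_images[of "\<lambda>_ _. True"] unfolding drawing_def by auto
qed

lemma faceD:
  assumes "f \<in> face_set"
  shows "open f" "connected f" "f \<noteq> {}" "f \<inter> plane_drawing = {}"
proof -
  show "open f"
    using assms closed_plane_drawing open_components[of "- plane_drawing" f]
    unfolding faces_def by (simp add: open_Compl)
  show "connected f" "f \<noteq> {}"
    using assms in_components_connected in_components_nonempty unfolding faces_def by auto
  show "f \<inter> plane_drawing = {}"
    using assms in_components_subset unfolding faces_def by blast
qed

lemma face_triangular: "f \<in> face_set \<Longrightarrow> \<exists>x u w. triangular_face f x u w"
  using embedded unfolding triangulation_emb_def triangular_face_def by blast

lemma triangular_face_rotate: "triangular_face f x u w \<Longrightarrow> triangular_face f u w x"
  unfolding triangular_face_def by auto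

lemma triangular_face_flip: "triangular_face f x u w \<Longrightarrow> triangular_face f x w u"
  unfolding triangular_face_def using edgeD edge_image_commute by auto

lemma triangular_face_inside_or_outside:
  assumes "triangular_face f x u w"
  shows "f = inside (triangle_image x u w) \<or> f = outside (triangle_image x u w)"
proof -
  have f: "f \<in> face_set" "E x u" "E u w" "E w x" "x \<noteq> u" "u \<noteq> w" "w \<noteq> x"
    "frontier f = triangle_image x u w"
    using assms unfolding triangular_face_def by auto
  obtain g where g: "simple_path g" "pathfinish g = pathstart g" "path_image g = triangle_image x u w"
    using plane_embedding_triangle_simple_loop[OF plane_embedding f(2-7)] by blast
  have "triangle_image x u w \<subseteq> plane_drawing"
    using f(2-4) unfolding drawing_def by blast
  then have "f \<inter> path_image g = {}"
    using faceD(4)[OF f(1)] g(3) by blast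
  then show ?thesis
    using connected_eq_Jordan_inside_or_outside[OF g(1,2) faceD(2,3)[OF f(1)]] f(8) g(3)
    by simp
qed

lemma finite_faces: "finite face_set"
proof (rule finite_subset)
  let ?sides = "\<lambda>(x, u, w). {inside (triangle_image x u w), outside (triangle_image x u w)}"
  show "face_set \<subseteq> \<Union>(?sides ` (V \<times> V \<times> V))"
  proof
    fix f
    assume "f \<in> face_set"
    then obtain x u w where t: "triangular_face f x u w"
      using face_triangular by blast
    then have "(x, u, w) \<in> V \<times> V \<times> V"
      unfolding triangular_face_def using edgeD by auto
    then show "f \<in> \<Union>(?sides ` (V \<times> V \<times> V))"
      using triangular_face_inside_or_outside[OF t] by auto
  qed
  show "finite (\<Union>(?sides ` (V \<times> V \<times> V)))"
    using finite_vertices by auto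
qed

lemma triangular_face_through_edge_point:
  assumes t: "triangular_face f x a b" and "E u v"
    and z: "z \<in> frontier f" "z \<in> edge_image u v" "z \<notin> p ` V"
  shows "\<exists>w. triangular_face f w u v"
proof -
  have first_side: "\<exists>w. triangular_face f w u v"
    if t': "triangular_face f x' a' b'" and z': "z \<in> edge_image x' a'" for x' a' b'
  proof -
    have "E x' a'"
      using t' unfolding triangular_face_def by blast
    have "{x', a'} = {u, v}"
    proof (rule ccontr)
      assume "{x', a'} \<noteq> {u, v}"
      then have "z \<in> p ` ({x', a'} \<inter> {u, v})"
        using edge_images_meet_in_vertices[OF \<open>E x' a'\<close> \<open>E u v\<close>] z(2) z' by blast
      moreover have "{x', a'} \<inter> {u, v} \<subseteq> V"
        using edgeD[OF \<open>E u v\<close>] by auto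
      ultimately show False
        using z(3) by blast
    qed
    then consider "x' = u" "a' = v" | "x' = v" "a' = u"
      by (auto simp: doubleton_eq_iff)
    then show ?thesis
    proof cases
      case 1
      then show ?thesis
        using triangular_face_rotate[OF triangular_face_rotate[OF t']] by blast
    next
      case 2
      then show ?thesis
        using triangular_face_rotate[OF triangular_face_flip[OF t']] by blast
    qed
  qed
  have "z \<in> edge_image x a \<or> z \<in> edge_image a b \<or> z \<in> edge_image b x"
    using z(1) t unfolding triangular_face_def by blast
  then show ?thesis
    using first_side[OF t] first_side[OF triangular_face_rotate[OF t]]
      first_side[OF triangular_face_rotate[OF triangular_face_rotate[OF t]]] by blast
qed

lemma point_on_frontier_of_face:
  assumes "A \<subseteq> - plane_drawing" "z \<in> closure A" "z \<in> plane_drawing"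
  obtains f where "f \<in> face_set" "f \<inter> A \<noteq> {}" "z \<in> frontier f"
proof -
  let ?F = "{f \<in> face_set. f \<inter> A \<noteq> {}}"
  have "A \<subseteq> \<Union>?F"
    using assms(1) Union_components[of "- plane_drawing"] unfolding faces_def by blast
  then have "z \<in> closure (\<Union>?F)"
    using assms(2) closure_mono by blast
  also have "\<dots> = \<Union>(closure ` ?F)"
    using finite_faces by (simp add: closure_Union_finite)
  finally obtain f where f: "f \<in> ?F" "z \<in> closure f"
    by blast
  moreover have "z \<notin> interior f"
    using faceD[of f] f(1) assms(3) by (auto simp: interior_open)
  ultimately show ?thesis
    using that unfolding frontier_def by blast
qed

lemma edge_isolated_point:
  assumes "E u v"
  obtains z r where "z \<in> edge_image u v" "z \<notin> p ` V" "r > 0" "ball z r \<inter> plane_drawing \<subseteq> edge_image u v"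
proof -
  define z where "z = \<gamma> u v (1/2)"
  have "z \<in> edge_image u v"
    unfolding z_def path_image_def by auto
  moreover have "z \<noteq> p u" "z \<noteq> p v"
  proof -
    have inj: "inj_on (\<gamma> u v) {0..1}"
      using arc_imp_inj_on edge_arc(1)[OF assms] by blast
    have "\<gamma> u v (1/2) \<noteq> \<gamma> u v 0" "\<gamma> u v (1/2) \<noteq> \<gamma> u v 1"
      using inj_onD[OF inj, of "1/2" 0] inj_onD[OF inj, of "1/2" 1] by auto
    then show "z \<noteq> p u" "z \<noteq> p v"
      using edge_arc(2,3)[OF assms] unfolding z_def pathstart_def pathfinish_def by auto
  qed
  ultimately have z: "z \<in> edge_image u v" "z \<notin> p ` V"
    using edge_arc(4)[OF assms] by blast+
  define K where "K = p ` V \<union> \<Union>{edge_image a b | a b. E a b \<and> {a, b} \<noteq> {u, v}}"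
  have "closed K"
    unfolding K_def using finite_vertices closed_edge_images
    by (intro closed_Un) (auto simp: finite_imp_closed)
  moreover have "z \<notin> edge_image a b" if "E a b" "{a, b} \<noteq> {u, v}" for a b
  proof -
    have "p ` ({a, b} \<inter> {u, v}) \<subseteq> p ` V"
      using edgeD[OF assms] by auto
    then show ?thesis
      using edge_images_meet_in_vertices[OF that(1) assms that(2)] z by blast
  qed
  then have "z \<notin> K"
    unfolding K_def using z(2) by fastforce
  ultimately obtain r where "r > 0" "ball z r \<subseteq> - K"
    using open_contains_ball[of "- K"] by (auto simp: open_Compl)
  moreover have "edge_image a b \<subseteq> K \<union> edge_image u v" if "E a b" for a b
  proof (cases "{a, b} = {u, v}")
    case True
    then have "edge_image a b = edge_image u v"
      using edge_image_commute[OF assms] by (auto simp: doubleton_eq_iff)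
    then show ?thesis
      by blast
  next
    case False
    then show ?thesis
      unfolding K_def using that by blast
  qed
  then have "plane_drawing \<subseteq> K \<union> edge_image u v"
    unfolding drawing_def K_def by blast
  ultimately show ?thesis
    using that z by blast
qed

lemma triangular_face_opposite_side:
  assumes "triangular_face f x u w"
  obtains R where "R \<inter> f = {}" "R \<inter> triangle_image x u w = {}" "frontier R = triangle_image x u w"
proof -
  let ?J = "triangle_image x u w"
  obtain g where g: "simple_path g" "pathfinish g = pathstart g" "path_image g = ?J"
    using plane_embedding_triangle_simple_loop[OF plane_embedding] assms
    unfolding triangular_face_def by metis
  have J: "inside ?J \<inter> outside ?J = {}" "inside ?J \<union> outside ?J = - ?J"
    "frontier (inside ?J) = ?J" "frontier (outside ?J) = ?J"
    using Jordan_inside_outside[OF g(1,2)] g(3) by auto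
  consider "f = inside ?J" | "f = outside ?J"
    using triangular_face_inside_or_outside[OF assms] by blast
  then show ?thesis
  proof cases
    case 1
    then show ?thesis
      using that[of "outside ?J"] J by blast
  next
    case 2
    then show ?thesis
      using that[of "inside ?J"] J by blast
  qed
qed

lemma edge_on_two_faces:
  assumes "E u v"
  obtains f1 f2 w1 w2 where "f1 \<noteq> f2" "triangular_face f1 w1 u v" "triangular_face f2 w2 u v"
proof -
  obtain z r where z: "z \<in> edge_image u v" "z \<notin> p ` V"
    and r: "r > 0" "ball z r \<inter> plane_drawing \<subseteq> edge_image u v"
    using edge_isolated_point[OF assms] by blast
  have z_drawn: "z \<in> plane_drawing"
    using z(1) assms unfolding drawing_def by blast
  have face_at_z: "\<exists>w. triangular_face f w u v" if "f \<in> face_set" "z \<in> frontier f" for f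
    using face_triangular[OF that(1)] triangular_face_through_edge_point[OF _ assms that(2) z] by blast
  have "z \<in> closure (- plane_drawing)"
    using arc_point_in_closure_complement[OF edge_arc(1)[OF assms] _ r] by simp
  then obtain f1 where f1: "f1 \<in> face_set" "z \<in> frontier f1"
    using point_on_frontier_of_face[of "- plane_drawing"] z_drawn by blast
  then obtain w1 where w1: "triangular_face f1 w1 u v"
    using face_at_z by blast
  \<comment> \<open>a second face must touch z from the other side of the triangle bounding f1\<close>
  obtain R where R: "R \<inter> f1 = {}" "R \<inter> triangle_image w1 u v = {}"
    "frontier R = triangle_image w1 u v"
    using triangular_face_opposite_side[OF w1] .
  have "z \<in> closure R"
    using R(3) z(1) unfolding frontier_def by blast
  have "z \<in> closure (ball z r \<inter> R)"
    using open_Int_closure_subset[of "ball z r" R] \<open>z \<in> closure R\<close> r(1) by auto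
  moreover have "ball z r \<inter> R \<subseteq> - plane_drawing"
    using r(2) R(2) by blast
  ultimately obtain f2 where f2: "f2 \<in> face_set" "f2 \<inter> (ball z r \<inter> R) \<noteq> {}" "z \<in> frontier f2"
    using point_on_frontier_of_face z_drawn by metis
  then obtain w2 where "triangular_face f2 w2 u v"
    using face_at_z by blast
  moreover have "f1 \<noteq> f2"
    using f2(2) R(1) by blast
  ultimately show ?thesis
    using that w1 by blast
qed

lemma two_faces_same_triangle_vertices:
  assumes t: "triangular_face f1 w u v" "triangular_face f2 w u v" and "f1 \<noteq> f2"
  shows "V = {w, u, v}"
proof -
  let ?J = "triangle_image w u v"
  have e: "E w u" "E u v" "E v w"
    using t(1) unfolding triangular_face_def by blast+
  obtain g where g: "simple_path g" "pathfinish g = pathstart g" "path_image g = ?J"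
    using plane_embedding_triangle_simple_loop[OF plane_embedding] t(1)
    unfolding triangular_face_def by metis
  have "f1 = inside ?J \<or> f1 = outside ?J" "f2 = inside ?J \<or> f2 = outside ?J"
    using triangular_face_inside_or_outside t by blast+
  then have "f1 \<union> f2 = inside ?J \<union> outside ?J"
    using \<open>f1 \<noteq> f2\<close> by (metis Un_commute)
  also have "\<dots> = - ?J"
    using Jordan_inside_outside[OF g(1,2)] g(3) by simp
  finally have "f1 \<union> f2 = - ?J" .
  moreover have "(f1 \<union> f2) \<inter> plane_drawing = {}"
    using faceD(4) t unfolding triangular_face_def by blast
  ultimately have "p ` V \<subseteq> ?J \<inter> p ` V"
    unfolding drawing_def by blast
  also have "\<dots> = p ` {w, u, v}"
    using edge_arc(4)[OF e(1)] edge_arc(4)[OF e(2)] edge_arc(4)[OF e(3)] by auto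
  finally have "p ` V \<subseteq> p ` {w, u, v}" .
  moreover have "{w, u, v} \<subseteq> V"
    using edgeD e by blast
  ultimately show ?thesis
    using inj_on_image_mem_iff[OF inj_on_vertices] by blast
qed

lemma edge_on_two_facial_triangles:
  assumes "E u v"
  obtains w1 w2 where "facial_triangle V E p \<gamma> w1 u v" "facial_triangle V E p \<gamma> w2 u v"
    "w1 = w2 \<Longrightarrow> V = {w1, u, v}"
  using edge_on_two_faces[OF assms] two_faces_same_triangle_vertices facial_triangle_iff_triangular_face
  by metis

lemma single_triangle_dominated:
  assumes "facial_triangle V E p \<gamma> w u v" "V = {w, u, v}"
  shows "independent_dominating_set V E {u}" "3 * card {u} = card V"
proof -
  have "E w u" "E v u" "\<not> E u u" "w \<noteq> u" "u \<noteq> v" "v \<noteq> w"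
    using assms(1) edgeD(3,4) unfolding facial_triangle_def by metis+
  then show "independent_dominating_set V E {u}" "3 * card {u} = card V"
    using assms(2) unfolding independent_dominating_set_def by auto
qed

end

lemma U_set_eq_colour_unseen:
  "U_set V E \<psi> i = {x \<in> V. i \<notin> colors_closed_nbhd V E \<psi> x}"
  unfolding U_set_def color_class_def colors_closed_nbhd_def by blast

lemma colors_closed_nbhd_subset:
  "partial_proper_4_coloring V E \<psi> \<Longrightarrow> colors_closed_nbhd V E \<psi> x \<subseteq> {1..4}"
  unfolding partial_proper_4_coloring_def colors_closed_nbhd_def by blast

lemma uncoloured_not_in_U_set:
  assumes col: "partial_proper_4_coloring V E \<psi>"
    and uncol_deg: "\<forall>v\<in>V. \<psi> v = None \<longrightarrow> degree V E v = 4"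
    and four: "\<forall>v\<in>V. degree V E v \<le> 5 \<longrightarrow> card (colors_closed_nbhd V E \<psi> v) = 4"
    and "x \<in> V" "\<psi> x = None" "i \<in> {1..4}"
  shows "x \<notin> U_set V E \<psi> i"
proof -
  have "colors_closed_nbhd V E \<psi> x \<subseteq> {1..4}"
    using col by (rule colors_closed_nbhd_subset)
  moreover have "card (colors_closed_nbhd V E \<psi> x) = card {1..4::nat}"
    using four uncol_deg assms(4,5) by simp
  ultimately have "colors_closed_nbhd V E \<psi> x = {1..4}"
    by (simp add: card_subset_eq)
  then show ?thesis
    using assms(6) unfolding U_set_eq_colour_unseen by blast
qed

lemma bad_edge_common_neighbour_uncoloured:
  assumes col: "partial_proper_4_coloring V E \<psi>" and sg: "simple_graph V E"
    and uncol_deg: "\<forall>v\<in>V. \<psi> v = None \<longrightarrow> degree V E v = 4"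
    and four: "\<forall>v\<in>V. degree V E v \<le> 5 \<longrightarrow> card (colors_closed_nbhd V E \<psi> v) = 4"
    and bad: "bad_edge V E \<psi> u v" and w: "E u w" "E v w"
  shows "\<psi> w = None"
proof (rule ccontr)
  assume "\<psi> w \<noteq> None"
  obtain i j where ij: "i \<in> {1..4}" "j \<in> {1..4}" "i \<noteq> j"
    and U: "u \<in> U_set V E \<psi> i" "v \<in> U_set V E \<psi> j" and "E u v"
    using bad unfolding bad_edge_def by blast
  have V: "u \<in> V" "v \<in> V" "w \<in> V" and "E v u"
    using sg \<open>E u v\<close> w unfolding simple_graph_def by blast+
  have "\<psi> u \<noteq> None" "\<psi> v \<noteq> None"
    using uncoloured_not_in_U_set[OF col uncol_deg four] U ij V by blast+
  then obtain a b c where abc: "\<psi> u = Some a" "\<psi> v = Some b" "\<psi> w = Some c"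
    using \<open>\<psi> w \<noteq> None\<close> by blast
  have proper: "\<psi> x \<noteq> \<psi> y" if "E x y" "\<psi> x \<noteq> None" for x y
    using col that unfolding partial_proper_4_coloring_def by blast
  have "card {a, b, c} = 3"
    using proper[OF \<open>E u v\<close>] proper[OF w(1)] proper[OF w(2)] abc by auto
  have "{a, b, c} \<subseteq> colors_closed_nbhd V E \<psi> u \<inter> colors_closed_nbhd V E \<psi> v"
    using abc \<open>E u v\<close> \<open>E v u\<close> w V unfolding colors_closed_nbhd_def by blast
  also have "\<dots> \<subseteq> {1..4} - {i, j}"
    using U colors_closed_nbhd_subset[OF col] unfolding U_set_eq_colour_unseen by blast
  finally have "card {a, b, c} \<le> card ({1..4} - {i, j})"
    by (intro card_mono) auto
  also have "\<dots> = 2"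
    using ij by (simp add: card_Diff_subset)
  finally show False
    using \<open>card {a, b, c} = 3\<close> by simp
qed

lemma facial_triangle_over_bad_edge_critical:
  assumes col: "partial_proper_4_coloring V E \<psi>" and sg: "simple_graph V E"
    and uncol_deg: "\<forall>v\<in>V. \<psi> v = None \<longrightarrow> degree V E v = 4"
    and four: "\<forall>v\<in>V. degree V E v \<le> 5 \<longrightarrow> card (colors_closed_nbhd V E \<psi> v) = 4"
    and bad: "bad_edge V E \<psi> u v" and t: "facial_triangle V E p \<gamma> w u v"
  shows "on_critical_cycle V E p \<gamma> \<psi> w u v"
proof -
  have "E w u" "E v w"
    using t unfolding facial_triangle_def by blast+
  moreover have "w \<in> V" "E u w"
    using sg \<open>E w u\<close> unfolding simple_graph_def by blast+
  ultimately have "\<psi> w = None"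
    using bad_edge_common_neighbour_uncoloured[OF col sg uncol_deg four bad] by blast
  then show ?thesis
    using t \<open>w \<in> V\<close> unfolding on_critical_cycle_def by blast
qed

theorem mainTheorem5:
  fixes V :: "'a set" and E :: "'a \<Rightarrow> 'a \<Rightarrow> bool"
    and p :: "'a \<Rightarrow> complex" and \<gamma> :: "'a \<Rightarrow> 'a \<Rightarrow> real \<Rightarrow> complex"
    and \<psi> :: "'a \<Rightarrow> nat option"
  assumes tri: "triangulation_emb V E p \<gamma>"
    and counterex: "\<not> (\<exists>S. independent_dominating_set V E S \<and> 3 * card S \<le> card V)"
    and smallest: "\<forall>(V' :: 'a set) E'. triangulation V' E' \<and> card V' < card V \<longrightarrow>
                     (\<exists>S. independent_dominating_set V' E' S \<and> 3 * card S \<le> card V')"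
    and col: "partial_proper_4_coloring V E \<psi>"
    and uncol_deg: "\<forall>v\<in>V. \<psi> v = None \<longrightarrow> degree V E v = 4"
    and three: "\<forall>v\<in>V. card (colors_closed_nbhd V E \<psi> v) \<ge> 3"
    and four: "\<forall>v\<in>V. degree V E v \<le> 5 \<longrightarrow> card (colors_closed_nbhd V E \<psi> v) = 4"
    and bad: "bad_edge V E \<psi> u v"
  shows "\<exists>x y. x \<noteq> y \<and> on_critical_cycle V E p \<gamma> \<psi> x u v \<and> on_critical_cycle V E p \<gamma> \<psi> y u v"
proof -
  interpret plane_triangulation V E p \<gamma>
    using tri by unfold_locales
  have "E u v"
    using bad unfolding bad_edge_def by blast
  then obtain w1 w2 where t: "facial_triangle V E p \<gamma> w1 u v" "facial_triangle V E p \<gamma> w2 u v"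
    and whole: "w1 = w2 \<Longrightarrow> V = {w1, u, v}"
    using edge_on_two_facial_triangles by blast
  have "w1 \<noteq> w2"
  proof
    assume "w1 = w2"
    then show False
      using counterex single_triangle_dominated[OF t(1) whole] by (metis order_refl)
  qed
  then show ?thesis
    using facial_triangle_over_bad_edge_critical[OF col simple_graph uncol_deg four bad] t by blast
qed

end
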